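(* For any constant $\epsilon\in(0,1)$, every deterministic $O(1)$-approximation algorithm for the $1$-region problem must make at least $(1-\epsilon)\log\log n$ adaptive queries to the sorted input list $X[1,n]$ (in the worst case), for all sufficiently large $n$.
   Context: Logarithms are base $2$. The input is a list $X[1,n]$ whose entries are in $\{0,1\}$, sorted in nondecreasing order; the algorithm accesses it only by adaptive queries, each revealing one entry. For $d>1$, a $d$-approximate $1$-region is an interval $R=[s,n]$ such that at least $\frac{|R|}{d}$ numbers in $X[s,n]$ equal $1$ and $[s,n]$ contains all positions $j$ with $X[j]=1$; an $O(1)$-approximation algorithm outputs a $d$-approximate $1$-region for some constant $d>1$ independent of $n$. *)

theory Defs
  imports Complex_Main
begin

text \<open>Deterministic adaptive query algorithms as decision trees.
  Ask i t0 t1 queries entry X[i]; if it is 0 continue with t0, otherwise (it is 1) with t1.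
  Out s outputs the interval [s,n].\<close>
datatype qtree = Out nat | Ask nat qtree qtree

fun run :: "qtree \<Rightarrow> (nat \<Rightarrow> nat) \<Rightarrow> nat" where
  "run (Out s) X = s"
| "run (Ask i t0 t1) X = (if X i = 0 then run t0 X else run t1 X)"

fun cost :: "qtree \<Rightarrow> (nat \<Rightarrow> nat) \<Rightarrow> nat" where
  "cost (Out s) X = 0"
| "cost (Ask i t0 t1) X = Suc (if X i = 0 then cost t0 X else cost t1 X)"

fun queries_in :: "nat \<Rightarrow> qtree \<Rightarrow> bool" where
  "queries_in n (Out s) = True"
| "queries_in n (Ask i t0 t1) = (1 \<le> i \<and> i \<le> n \<and> queries_in n t0 \<and> queries_in n t1)"

definition sorted01 :: "nat \<Rightarrow> (nat \<Rightarrow> nat) \<Rightarrow> bool" where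
  "sorted01 n X \<longleftrightarrow> (\<forall>j\<in>{1..n}. X j \<in> {0,1}) \<and> (\<forall>i j. 1 \<le> i \<and> i \<le> j \<and> j \<le> n \<longrightarrow> X i \<le> X j)"

text \<open>[s,n] (with 1 <= s <= n+1; s = n+1 is the empty interval) is a d-approximate 1-region.\<close>
definition approx_region :: "real \<Rightarrow> nat \<Rightarrow> (nat \<Rightarrow> nat) \<Rightarrow> nat \<Rightarrow> bool" where
  "approx_region d n X s \<longleftrightarrow> 1 \<le> s \<and> s \<le> n + 1
     \<and> real (card {j. s \<le> j \<and> j \<le> n \<and> X j = 1}) \<ge> real (n + 1 - s) / d
     \<and> (\<forall>j\<in>{1..n}. X j = 1 \<longrightarrow> s \<le> j)"

end

theory Submission
  imports Defs
begin

text \<open>A decision tree whose depth is at most q on all inputs of a family S can produce at most 2^q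
  distinct outputs on S. Run on the n step inputs with k = 1, ..., n ones, a correct algorithm
  must output, for each k, a start s with k \<le> n + 1 - s \<le> d k; so the at most 2^q region lengths it
  ever outputs must cover {1..n} by intervals [m/d, m]. Covering by c such intervals reaches at
  most (2d)^c, whence n \<le> (2d)^(2^q) and q \<ge> log log n - log log (2d). The lower bound holds for
  every decision tree.\<close>

lemma card_run_image_le:
  assumes "\<forall>X\<in>S. cost t X \<le> q"
  shows "card (run t ` S) \<le> 2 ^ q"
  using assms
proof (induction t arbitrary: S q)
  case (Out s)
  have "card (run (Out s) ` S) \<le> card {s}"
    by (intro card_mono) auto
  also have "\<dots> \<le> 2 ^ q"
    by simp
  finally show ?case .
next
  case (Ask i t0 t1)
  show ?case
  proof (cases "S = {}")
    case False
    then obtain X where "X \<in> S"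
      by auto
    with Ask.prems obtain q' where q: "q = Suc q'"
      by (cases q) (auto split: if_splits)
    define S0 where "S0 = {X\<in>S. X i = 0}"
    define S1 where "S1 = {X\<in>S. X i \<noteq> 0}"
    have "run (Ask i t0 t1) ` S = run t0 ` S0 \<union> run t1 ` S1"
      unfolding S0_def S1_def by auto
    then have "card (run (Ask i t0 t1) ` S) \<le> card (run t0 ` S0) + card (run t1 ` S1)"
      by (simp add: card_Un_le)
    also have "\<dots> \<le> 2 ^ q' + 2 ^ q'"
      using Ask.prems q by (intro add_mono Ask.IH) (auto simp: S0_def S1_def)
    finally show ?thesis
      using q by simp
  qed simp
qed

lemma exists_nat_below_threshold:
  fixes d :: real
  assumes "d > 0" "m \<ge> 1"
  obtains K where "d * real K < real m" "real m \<le> d * (real K + 1)"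
proof
  define C where "C = \<lceil>real m / d\<rceil>"
  have "real m / d > 0"
    using assms by simp
  then have "C \<ge> 1"
    unfolding C_def by linarith
  then have K: "real (nat (C - 1)) = of_int C - 1"
    by simp
  have "of_int C - 1 < real m / d" "real m / d \<le> of_int C"
    unfolding C_def by linarith+
  with assms(1) K show "d * real (nat (C - 1)) < real m" "real m \<le> d * (real (nat (C - 1)) + 1)"
    by (simp_all add: pos_less_divide_eq pos_divide_le_eq mult.commute)
qed

lemma interval_cover_bound:
  fixes d :: real
  assumes "finite M" "d \<ge> 1"
    and "\<forall>k\<in>{1..K}. \<exists>m\<in>M. k \<le> m \<and> real m \<le> d * real k"
  shows "real K \<le> (2 * d) ^ card M"
  using assms
proof (induction "card M" arbitrary: M K)
  case 0
  then show ?case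
    by (cases K) auto
next
  case (Suc c)
  show ?case
  proof (cases "K = 0")
    case True
    then show ?thesis
      using Suc.prems by simp
  next
    case False
    then obtain m where m: "m \<in> M" "K \<le> m" "real m \<le> d * real K"
      using Suc.prems(3) by force
    have d: "d > 0"
      using Suc.prems(2) by simp
    obtain K' where K': "d * real K' < real m" "real m \<le> d * (real K' + 1)"
      using exists_nat_below_threshold[OF d] m(2) False by (metis le_trans less_one not_le)
    \<comment> \<open>The points d k < m can no longer be covered by m itself.\<close>
    have "\<forall>k\<in>{1..K'}. \<exists>m'\<in>M - {m}. k \<le> m' \<and> real m' \<le> d * real k"
    proof
      fix k assume k: "k \<in> {1..K'}"
      then have dk: "d * real k < real m"
        using K'(1) d by (smt (verit) atLeastAtMost_iff mult_left_mono of_nat_le_iff)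
      with m(3) d have "k \<le> K"
        by (smt (verit) mult_le_cancel_left_pos of_nat_le_iff)
      then obtain m' where "m' \<in> M" "k \<le> m'" "real m' \<le> d * real k"
        using Suc.prems(3) k by force
      with dk show "\<exists>m'\<in>M - {m}. k \<le> m' \<and> real m' \<le> d * real k"
        by force
    qed
    moreover have "card (M - {m}) = c"
      using Suc.hyps(2) m(1) by simp
    ultimately have IH: "real K' \<le> (2 * d) ^ c"
      using Suc.hyps(1) Suc.prems(1,2) by (metis finite_Diff)
    have "1 \<le> (2 * d) ^ c"
      using Suc.prems(2) by (intro one_le_power) simp
    then have "real K' + 1 \<le> 2 * (2 * d) ^ c"
      using IH by linarith
    then have "real m \<le> d * (2 * (2 * d) ^ c)"
      using K'(2) d by (smt (verit) mult_left_mono)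
    also have "\<dots> = (2 * d) ^ card M"
      by (simp add: Suc.hyps(2)[symmetric])
    finally show ?thesis
      using m(2) by simp
  qed
qed

definition step_input :: "nat \<Rightarrow> nat \<Rightarrow> nat \<Rightarrow> nat" where
  "step_input n k j = (if n + 1 - k \<le> j then 1 else 0)"

lemma sorted01_step_input: "sorted01 n (step_input n k)"
  unfolding sorted01_def step_input_def by auto

lemma approx_region_step_input:
  assumes "approx_region d n (step_input n k) s" "k \<in> {1..n}" "d > 0"
  shows "k \<le> n + 1 - s" "real (n + 1 - s) \<le> d * real k"
proof -
  have "step_input n k (n + 1 - k) = 1" "n + 1 - k \<in> {1..n}"
    using assms(2) by (auto simp: step_input_def)
  then have s: "s \<le> n + 1 - k"
    using assms(1) unfolding approx_region_def by blast
  then show "k \<le> n + 1 - s"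
    using assms(2) by auto
  have "{j. s \<le> j \<and> j \<le> n \<and> step_input n k j = 1} = {n + 1 - k..n}"
    using s by (auto simp: step_input_def)
  then have "real (n + 1 - s) / d \<le> real k"
    using assms(1,2) unfolding approx_region_def by auto
  then show "real (n + 1 - s) \<le> d * real k"
    using assms(3) by (simp add: divide_le_eq mult.commute)
qed

lemma exists_input_cost_lower_bound:
  fixes d :: real
  assumes "d \<ge> 1" "n \<ge> 1"
    and correct: "\<forall>X. sorted01 n X \<longrightarrow> approx_region d n X (run t X)"
  obtains X where "sorted01 n X" "real n \<le> (2 * d) ^ (2 ^ cost t X)"
proof -
  define S where "S = step_input n ` {1..n}"
  have S: "finite S" "S \<noteq> {}"
    unfolding S_def using assms(2) by auto
  define q where "q = Max (cost t ` S)"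
  have "q \<in> cost t ` S"
    unfolding q_def using S by simp
  then obtain X where X: "X \<in> S" "cost t X = q"
    by auto
  have "\<forall>Y\<in>S. cost t Y \<le> q"
    unfolding q_def using S by simp
  then have card_outputs: "card (run t ` S) \<le> 2 ^ q"
    by (rule card_run_image_le)
  define M where "M = (\<lambda>s. n + 1 - s) ` run t ` S"
  have "card M \<le> 2 ^ q"
    unfolding M_def using card_image_le[of "run t ` S"] S(1) card_outputs by (meson finite_imageI le_trans)
  moreover have "\<forall>k\<in>{1..n}. \<exists>m\<in>M. k \<le> m \<and> real m \<le> d * real k"
  proof
    fix k assume k: "k \<in> {1..n}"
    have "approx_region d n (step_input n k) (run t (step_input n k))"
      using correct sorted01_step_input by blast
    moreover have "n + 1 - run t (step_input n k) \<in> M"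
      unfolding M_def S_def using k by blast
    ultimately show "\<exists>m\<in>M. k \<le> m \<and> real m \<le> d * real k"
      using approx_region_step_input k assms(1) by fastforce
  qed
  then have "real n \<le> (2 * d) ^ card M"
    using interval_cover_bound[of M d n] S(1) assms(1) unfolding M_def by blast
  ultimately have "real n \<le> (2 * d) ^ (2 ^ q)"
    using assms(1) by (smt (verit) power_increasing)
  with X that show thesis
    using sorted01_step_input unfolding S_def by auto
qed

lemma log_log_le_of_le_power_power:
  fixes x b :: real
  assumes "x \<le> b ^ (2 ^ q)" "x > 1" "b > 2"
  shows "log 2 (log 2 x) \<le> q + log 2 (log 2 b)"
proof -
  have "log 2 x \<le> log 2 (b ^ (2 ^ q))"
    using assms by (subst log_le_cancel_iff) auto
  also have "\<dots> = 2 ^ q * log 2 b"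
    using assms(3) by (simp add: log_nat_power)
  finally have "log 2 x \<le> 2 ^ q * log 2 b" .
  moreover have "log 2 b > 0"
    using assms(3) by simp
  ultimately have "log 2 (log 2 x) \<le> log 2 (2 ^ q * log 2 b)"
    using assms by simp
  also have "\<dots> = q + log 2 (log 2 b)"
    using \<open>log 2 b > 0\<close> by (simp add: log_mult)
  finally show ?thesis .
qed

lemma log_log_ge_of_ge_powr_powr:
  fixes x y :: real
  assumes "2 powr (2 powr y) \<le> x"
  shows "y \<le> log 2 (log 2 x)"
proof -
  have "2 powr y \<le> log 2 x"
    using assms le_log_iff[of 2 x "2 powr y"] by (smt (verit) powr_gt_zero)
  then show ?thesis
    using le_log_iff[of 2 "log 2 x" y] by (smt (verit) powr_gt_zero)
qed

theorem corollary1: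
  fixes \<epsilon> d :: real and A :: "nat \<Rightarrow> qtree"
  assumes "0 < \<epsilon>" and "\<epsilon> < 1" and "d > 1"
    and "\<forall>n. queries_in n (A n)"
    and "\<forall>n X. sorted01 n X \<longrightarrow> approx_region d n X (run (A n) X)"
  shows "\<exists>N. \<forall>n\<ge>N. \<exists>X. sorted01 n X \<and>
           real (cost (A n) X) \<ge> (1 - \<epsilon>) * log 2 (log 2 (real n))"
proof -
  define L where "L = log 2 (log 2 (2 * d))"
  show ?thesis
  proof (intro exI[of _ "nat \<lceil>2 powr (2 powr (L / \<epsilon>))\<rceil> + 2"] allI impI)
    fix n assume n: "nat \<lceil>2 powr (2 powr (L / \<epsilon>))\<rceil> + 2 \<le> n"
    then have "2 powr (2 powr (L / \<epsilon>)) \<le> real n"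
      by linarith
    then have "L / \<epsilon> \<le> log 2 (log 2 (real n))"
      by (rule log_log_ge_of_ge_powr_powr)
    then have "L \<le> \<epsilon> * log 2 (log 2 (real n))"
      using assms(1) by (simp add: divide_le_eq mult.commute)
    moreover obtain X where X: "sorted01 n X" "real n \<le> (2 * d) ^ (2 ^ cost (A n) X)"
      using exists_input_cost_lower_bound[of d n "A n"] assms(3,5) n by auto
    moreover have "log 2 (log 2 (real n)) \<le> cost (A n) X + L"
      unfolding L_def using log_log_le_of_le_power_power X(2) assms(3) n by simp
    ultimately show "\<exists>X. sorted01 n X \<and> real (cost (A n) X) \<ge> (1 - \<epsilon>) * log 2 (log 2 (real n))"
      by (auto simp: algebra_simps)
  qed
qed

end
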